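(* Let $q$ be a power of $2$ and $k\ge1$ an integer. Let $L\in\mathbb{F}_{q^{3k}}[x]$ be a $2$-linearized polynomial (i.e. $L=\sum_i c_i x^{2^i}$ with $c_i\in\mathbb{F}_{q^{3k}}$) such that (i) $L$ permutes $\mathbb{F}_{q^k}$ (in particular maps $\mathbb{F}_{q^k}$ bijectively onto itself), and (ii) $L+L^{q^{2k}}\equiv S_{2k}^2+S_{2k}^{2q^{k+1}}\pmod{x^{q^{3k}}-x}$. Then $L+S_{2k}^{q^k+1}$ is a permutation polynomial of $\mathbb{F}_{q^{3k}}$.
   Context: $\mathbb{F}_Q$ is the finite field with $Q$ elements. For a power $q$ of $2$ and positive integer $m$, $S_m=x+x^q+\cdots+x^{q^{m-1}}\in\mathbb{F}_2[x]$; exponents on $S_m$ and $L$ denote powers of polynomials (so $L^{q^{2k}}$ is the $q^{2k}$-th power of $L$). A polynomial $f$ is a permutation polynomial of $\mathbb{F}_Q$ if $c\mapsto f(c)$ is a bijection of $\mathbb{F}_Q$. *)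

theory Defs
  imports "HOL-Computational_Algebra.Polynomial"
begin

definition S_poly :: "nat \<Rightarrow> nat \<Rightarrow> 'a::comm_ring_1 poly" where
  "S_poly q m = (\<Sum>i<m. monom 1 (q ^ i))"

definition linearized2 :: "'a::comm_ring_1 poly \<Rightarrow> bool" where
  "linearized2 L \<longleftrightarrow> (\<forall>n. coeff L n \<noteq> 0 \<longrightarrow> (\<exists>i. n = 2 ^ i))"

text \<open>The subfield F_{q^k} of a finite field, as the fixed points of x -> x^(q^k).\<close>
definition subfield_pow :: "nat \<Rightarrow> 'a::field set" where
  "subfield_pow r = {x. x ^ r = x}"

definition perm_poly :: "'a::{field,finite} poly \<Rightarrow> bool" where
  "perm_poly f \<longleftrightarrow> bij (poly f)"

end

theory Submission
  imports Defs "HOL-Number_Theory.Residues"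
begin

hide_const (open) up_ring.monom up_ring.coeff

text \<open>
  Let \<open>\<sigma> y = y ^ q ^ k\<close>, an additive automorphism of order 3 of the field with \<open>q ^ (3 * k)\<close>
  elements, and \<open>F = L + S\<^sub>2\<^sub>k ^ (q ^ k + 1)\<close>. The hypothesis on \<open>L + \<sigma>\<^sup>2 L\<close> together with
  \<open>S\<^sub>2\<^sub>k + \<sigma> S\<^sub>2\<^sub>k + \<sigma>\<^sup>2 S\<^sub>2\<^sub>k = 0\<close> gives \<open>F + \<sigma>\<^sup>2 F = M\<^sup>2\<close> for the additive map
  \<open>M x = x + \<sigma> x + \<sigma> (S\<^sub>2\<^sub>k x)\<close>. Hence \<open>F x = F y\<close> forces \<open>M (x + y) = 0\<close>. The kernel of \<open>M\<close>
  consists of fixed points \<open>z\<close> of \<open>\<sigma>\<close> with \<open>S\<^sub>2\<^sub>k z = 0\<close>; for these \<open>F (x + z) = F x + L z\<close>,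
  and \<open>L\<close> is injective on the fixed field of \<open>\<sigma>\<close>, so \<open>z = 0\<close>.
\<close>

lemma CHAR_eq_2_if_card_power_of_2:
  assumes "card (UNIV :: 'a::{field,finite} set) = 2 ^ m"
  shows "CHAR('a) = 2"
proof -
  have "prime CHAR('a)"
    by (intro prime_CHAR_semidom finite_imp_CHAR_pos) simp
  moreover have "CHAR('a) dvd 2 ^ m"
    using CHAR_dvd_CARD[where 'a='a] assms by simp
  ultimately show ?thesis
    using prime_dvd_power_nat primes_dvd_imp_eq two_is_prime_nat by blast
qed

lemma nonzero_power_card_minus_1:
  fixes x :: "'a::{field,finite}"
  assumes "x \<noteq> 0"
  shows "x ^ (card (UNIV :: 'a set) - 1) = 1"
proof -
  let ?U = "UNIV - {0::'a}"
  have "bij_betw ((*) x) ?U ?U"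
    using assms by (intro bij_betw_byWitness[where f' = "\<lambda>y. y / x"]) auto
  then have "(\<Prod>y\<in>?U. x * y) = \<Prod>?U"
    by (rule prod.reindex_bij_betw)
  moreover have "(\<Prod>y\<in>?U. x * y) = x ^ card ?U * \<Prod>?U"
    by (simp add: prod.distrib)
  moreover have "\<Prod>?U \<noteq> 0" and "card ?U = card (UNIV :: 'a set) - 1"
    by (simp_all add: card_Diff_singleton)
  ultimately show ?thesis
    by simp
qed

lemma power_card_eq_self:
  fixes x :: "'a::{field,finite}"
  shows "x ^ card (UNIV :: 'a set) = x"
proof (cases "x = 0")
  case False
  then have "x ^ card (UNIV :: 'a set) = x * x ^ (card (UNIV :: 'a set) - 1)"
    using finite_UNIV_card_ge_0[where 'a = 'a] by (simp flip: power_Suc)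
  with nonzero_power_card_minus_1[OF False] show ?thesis
    by simp
qed (use finite_UNIV_card_ge_0[where 'a = 'a] in simp)

lemma poly_linearized2_add:
  fixes L :: "'a::comm_ring_1 poly"
  assumes "CHAR('a) = 2" and "linearized2 L"
  shows "poly L (x + y) = poly L x + poly L y"
proof -
  have "coeff L n * (x + y) ^ n = coeff L n * x ^ n + coeff L n * y ^ n" for n
  proof (cases "coeff L n = 0")
    case False
    with \<open>linearized2 L\<close> obtain i where "n = 2 ^ i"
      unfolding linearized2_def by blast
    with \<open>CHAR('a) = 2\<close> show ?thesis
      by (simp add: freshmans_dream' distrib_left)
  qed simp
  then show ?thesis
    by (simp add: poly_altdef sum.distrib)
qed

lemma poly_linearized2_0:
  assumes "linearized2 L"
  shows "poly L 0 = 0"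
proof -
  have "coeff L 0 = 0"
    using assms by (auto simp: linearized2_def)
  then show ?thesis
    by (simp add: poly_0_coeff_0)
qed

lemma poly_S_poly: "poly (S_poly q m) x = (\<Sum>i<m. x ^ q ^ i)"
  by (simp add: S_poly_def poly_sum poly_monom)

lemma power_power_power: "(x ^ q ^ i) ^ q ^ j = (x::'a::monoid_mult) ^ q ^ (i + j)"
  by (simp add: power_mult power_add mult.commute flip: power_mult)

context
  assumes char2: "CHAR('a::field) = 2"
begin

lemma add_self [simp]: "x + x = (0::'a)" and add_self_left [simp]: "x + (x + y) = (y::'a)"
proof -
  have "(2::'a) = 0"
    by (metis char2 of_nat_CHAR of_nat_numeral)
  then show "x + x = (0::'a)"
    by (metis mult_2 mult_zero_left)
  then show "x + (x + y) = y"
    by (metis add.assoc add_0_left)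
qed

lemma eq_iff_add_eq_0: "x = y \<longleftrightarrow> x + y = (0::'a)"
  by (metis add_self add_self_left add_0_right)

lemma square_add: "(x + y)\<^sup>2 = x\<^sup>2 + (y::'a)\<^sup>2"
  by (rule freshmans_dream'[where n = 1]) (simp_all add: char2)

context
  fixes q e :: nat
  assumes q_eq: "q = 2 ^ e"
begin

lemma frob_add: "(x + y) ^ q ^ j = x ^ q ^ j + (y::'a) ^ q ^ j"
  by (rule freshmans_dream'[where n = "e * j"]) (simp_all add: char2 q_eq power_mult)

lemma frob_sum: "(\<Sum>i\<in>A. f i) ^ q ^ j = (\<Sum>i\<in>A. (f i::'a) ^ q ^ j)"
  by (rule freshmans_dream_sum'[where n = "e * j"]) (simp_all add: char2 q_eq power_mult)

lemma poly_S_poly_add: "poly (S_poly q m) (x + y) = poly (S_poly q m) x + poly (S_poly q m) (y::'a)"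
  by (simp add: poly_S_poly frob_add sum.distrib)

context
  fixes k :: nat
  assumes period: "\<And>x::'a. x ^ q ^ (3 * k) = x"
begin

abbreviation S2k :: "'a \<Rightarrow> 'a"
  where "S2k \<equiv> poly (S_poly q (2 * k))"

lemma frob_period: "(x ^ q ^ i) ^ q ^ j = (x::'a) ^ q ^ (i + j - 3 * k)" if "i + j \<ge> 3 * k"
proof -
  have "i + j = (i + j - 3 * k) + 3 * k"
    using that by simp
  then show ?thesis
    by (metis power_power_power period)
qed

text \<open>\<open>S\<^sub>2\<^sub>k = S\<^sub>k + \<sigma> S\<^sub>k\<close>, so the three conjugates of \<open>S\<^sub>2\<^sub>k\<close> contain each conjugate of \<open>S\<^sub>k\<close> twice.\<close>
lemma S2k_conjugates_sum: "S2k x + S2k x ^ q ^ k + S2k x ^ q ^ (2 * k) = 0"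
proof -
  define t where "t = (\<Sum>i<k. x ^ q ^ i)"
  have "S2k x = (\<Sum>i<k + k. x ^ q ^ i)"
    by (simp add: poly_S_poly mult_2)
  also have "\<dots> = t + (\<Sum>i<k. x ^ q ^ (k + i))"
    using sum.atLeastLessThan_concat[of 0 k "k + k" "\<lambda>i. x ^ q ^ i"]
      sum.atLeastLessThan_shift_bounds[of "\<lambda>i. x ^ q ^ i" 0 k k]
    by (simp add: t_def atLeast0LessThan comp_def)
  also have "(\<Sum>i<k. x ^ q ^ (k + i)) = t ^ q ^ k"
    by (simp add: t_def frob_sum power_power_power add.commute)
  finally have s: "S2k x = t + t ^ q ^ k" .
  have conj1: "S2k x ^ q ^ k = t ^ q ^ k + t ^ q ^ (2 * k)"
    unfolding s frob_add power_power_power by (simp add: mult_2)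
  have conj2: "S2k x ^ q ^ (2 * k) = t ^ q ^ (2 * k) + t"
    using frob_period[of k "2 * k" t] unfolding s frob_add power_power_power by simp
  show ?thesis
    unfolding conj1 conj2 unfolding s by (simp add: ac_simps)
qed

lemma S2k_power_q: "S2k x ^ q = S2k x + x + x ^ q ^ (2 * k)"
proof -
  have "S2k x ^ q = (\<Sum>i<2 * k. x ^ q ^ Suc i)"
    using frob_sum[of "\<lambda>i. x ^ q ^ i" "{..<2 * k}" 1]
    by (simp add: poly_S_poly power_power_power[of _ _ _ 1, simplified])
  then have "x + S2k x ^ q = (\<Sum>i<Suc (2 * k). x ^ q ^ i)"
    by (simp only: sum.lessThan_Suc_shift) simp
  also have "\<dots> = S2k x + x ^ q ^ (2 * k)"
    by (simp add: poly_S_poly)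
  finally show ?thesis
    by (metis add_self_left add.assoc add.commute)
qed

lemma add_conjugate_eq_square:
  assumes "poly L x + poly L x ^ q ^ (2 * k) = S2k x ^ 2 + S2k x ^ (2 * q ^ (k + 1))"
  defines "F \<equiv> poly L x + S2k x ^ (q ^ k + 1)"
  shows "F + F ^ q ^ (2 * k) = (x + x ^ q ^ k + S2k x ^ q ^ k)\<^sup>2"
proof -
  define s l where "s = S2k x" and "l = poly L x"
  define v where "v = (s ^ q) ^ q ^ k"
  have conj: "s ^ q ^ k + s ^ q ^ (2 * k) = s"
    using S2k_conjugates_sum[of x] unfolding s_def by (subst eq_iff_add_eq_0) (simp add: ac_simps)
  have F: "F = l + s ^ q ^ k * s"
    by (simp add: F_def s_def l_def)
  then have "F ^ q ^ (2 * k) = l ^ q ^ (2 * k) + s * s ^ q ^ (2 * k)"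
    by (simp add: frob_add power_mult_distrib frob_period[of k "2 * k"])
  then have "F + F ^ q ^ (2 * k) = (l + l ^ q ^ (2 * k)) + s * (s ^ q ^ k + s ^ q ^ (2 * k))"
    by (simp add: F distrib_left ac_simps)
  also have "\<dots> = s\<^sup>2 + v\<^sup>2 + s * s"
  proof -
    have "s ^ (2 * q ^ (k + 1)) = v\<^sup>2"
      unfolding v_def power_mult[symmetric] by (simp add: ac_simps)
    then show ?thesis
      using assms(1) conj unfolding s_def l_def by simp
  qed
  also have "\<dots> = v\<^sup>2"
    by (simp add: power2_eq_square ac_simps)
  also have "v = s ^ q ^ k + x ^ q ^ k + x"
    unfolding v_def s_def S2k_power_q frob_add by (simp add: frob_period[of "2 * k" k])
  finally show ?thesis
    by (simp add: s_def ac_simps)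
qed

lemma additive_map_eq_0D:
  assumes "z + z ^ q ^ k + S2k z ^ q ^ k = 0"
  shows "S2k z = 0" and "z ^ q ^ k = z"
proof -
  have "(z + z ^ q ^ k + S2k z ^ q ^ k) ^ q ^ (2 * k) = 0"
    using assms by (simp add: q_eq)
  then have "z ^ q ^ (2 * k) + z + S2k z = 0"
    unfolding frob_add by (simp add: power_power_power period)
  then have "S2k z = z + z ^ q ^ (2 * k)"
    by (subst eq_iff_add_eq_0) (simp add: ac_simps)
  then have "S2k z ^ q = 0"
    using S2k_power_q[of z] by (metis add.assoc add_self)
  then show "S2k z = 0"
    by (simp add: q_eq)
  with assms show "z ^ q ^ k = z"
    by (subst eq_iff_add_eq_0) (simp add: q_eq power_0_left ac_simps)
qed

lemma inj_L_plus_S_power: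
  assumes lin: "linearized2 L"
    and inj_sub: "inj_on (poly L) (subfield_pow (q ^ k))"
    and cond: "\<And>x. poly L x + poly L x ^ q ^ (2 * k) = S2k x ^ 2 + S2k x ^ (2 * q ^ (k + 1))"
  shows "inj (poly (L + S_poly q (2 * k) ^ (q ^ k + 1)))"
proof (rule injI)
  fix x y
  assume eq: "poly (L + S_poly q (2 * k) ^ (q ^ k + 1)) x
    = poly (L + S_poly q (2 * k) ^ (q ^ k + 1)) y"
  define M where "M w = w + w ^ q ^ k + S2k w ^ q ^ k" for w
  define z where "z = x + y"
  have y: "y = x + z"
    by (simp add: z_def)
  have "(M x)\<^sup>2 = (M y)\<^sup>2"
    using add_conjugate_eq_square[OF cond, of x] add_conjugate_eq_square[OF cond, of y] eq
    by (simp add: M_def)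
  moreover have "M z = M x + M y"
    unfolding M_def z_def poly_S_poly_add frob_add by (simp add: ac_simps)
  ultimately have "(M z)\<^sup>2 = 0"
    by (simp add: square_add)
  then have "M z = 0"
    by simp
  then have Sz: "S2k z = 0" and z_sub: "z \<in> subfield_pow (q ^ k)"
    using additive_map_eq_0D[of z] by (simp_all add: M_def subfield_pow_def)
  have "poly L z = poly L 0"
    using eq unfolding y
    by (simp add: poly_linearized2_add[OF char2 lin] poly_linearized2_0[OF lin] poly_S_poly_add Sz)
  moreover have "0 \<in> subfield_pow (q ^ k)"
    by (simp add: subfield_pow_def q_eq)
  ultimately have "z = 0"
    using inj_sub z_sub by (meson inj_onD)
  then show "x = y"
    by (simp add: y)
qed

end

end

end

theorem theorem4p1:
  fixes L :: "'a::{field,finite} poly" and q k e :: nat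
  assumes q_pow2: "q = 2 ^ e"
    and k_pos: "k \<ge> 1"
    and card: "card (UNIV :: 'a set) = q ^ (3 * k)"
    and lin: "linearized2 L"
    and perm_sub: "bij_betw (poly L) (subfield_pow (q ^ k)) (subfield_pow (q ^ k))"
    and cong: "(L + L ^ (q ^ (2 * k))) mod (monom 1 (q ^ (3 * k)) - [:0, 1:])
             = (S_poly q (2 * k) ^ 2 + S_poly q (2 * k) ^ (2 * q ^ (k + 1)))
                 mod (monom 1 (q ^ (3 * k)) - [:0, 1:])"
  shows "perm_poly (L + S_poly q (2 * k) ^ (q ^ k + 1))"
proof -
  have char2: "CHAR('a) = 2"
    using card by (intro CHAR_eq_2_if_card_power_of_2[where m = "e * (3 * k)"]) (simp add: q_pow2 power_mult)
  have period: "x ^ q ^ (3 * k) = x" for x :: 'a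
    using power_card_eq_self[of x] card by simp
  have "poly L x + poly L x ^ q ^ (2 * k)
      = poly (S_poly q (2 * k)) x ^ 2 + poly (S_poly q (2 * k)) x ^ (2 * q ^ (k + 1))" for x :: 'a
  proof -
    have "poly (monom 1 (q ^ (3 * k)) - [:0, 1:]) x = 0"
      by (simp add: poly_monom period)
    with arg_cong[OF cong, of "\<lambda>p. poly p x"] show ?thesis
      by (simp add: poly_mod)
  qed
  with char2 q_pow2 period lin bij_betw_imp_inj_on[OF perm_sub]
  have "inj (poly (L + S_poly q (2 * k) ^ (q ^ k + 1)))"
    by (rule inj_L_plus_S_power)
  then show ?thesis
    unfolding perm_poly_def bij_def using finite_UNIV_inj_surj[OF finite] by blast
qed

end
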